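(* Let $f$ satisfy $(\mathcal A)$, $t_0>0$, $q\ge\frac12$, $p>1$, $y:[t_0,+\infty[\to\mathcal H$ continuously differentiable and $\lambda:[t_0,+\infty[\to\,]0,+\infty[$ continuous, with $\tau(t)=\frac{1}{q^q}\big(t_0+\int_{t_0}^t[\lambda(r)]^{1/q}dr\big)^q$, such that $\dot y(t)+\dot\tau(t)\nabla f(y(t))=0$ and $[\lambda(t)]^p\|\nabla f(y(t))\|^{p-1}=1$ for all $t\ge t_0$. Then there exists $C_1>0$ with $\tau(t)\ge C_1(t-t_0)^{pq}$ for all $t\ge t_0$.
   Context: $\mathcal H$ is a real Hilbert space. Assumption $(\mathcal A)$: $f:\mathcal H\to\mathbb R$ is convex and continuously differentiable, $\operatorname{argmin}_{\mathcal H} f\neq\emptyset$, and $\nabla f$ is Lipschitz continuous on bounded subsets of $\mathcal H$. *)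

theory Defs
  imports "HOL-Analysis.Analysis"
begin

definition tau_fun :: "real \<Rightarrow> real \<Rightarrow> (real \<Rightarrow> real) \<Rightarrow> real \<Rightarrow> real" where
  "tau_fun q t0 lam t =
     (1 / q powr q) * (t0 + integral {t0..t} (\<lambda>r. lam r powr (1 / q))) powr q"

end

theory Submission
  imports Defs
begin

text \<open>Along the flow, convexity makes the energy \<open>\<tau> (f y - min f) + \<parallel>y - x\<^sub>*\<parallel>\<^sup>2 / 2\<close>
  decrease at rate at least \<open>\<tau> \<tau>' \<parallel>\<nabla>f y\<parallel>\<^sup>2\<close>, while monotonicity of \<open>\<nabla>f\<close> makes
  \<open>\<parallel>\<nabla>f y\<parallel>\<close> nonincreasing (a Dini-derivative argument, since \<open>\<nabla>f\<close> is only locally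
  Lipschitz). Together they keep \<open>\<tau> \<parallel>\<nabla>f y\<parallel>\<close> bounded. Writing \<open>\<tau> = (u / q)^q\<close>, the
  coupling \<open>\<lambda>^p \<parallel>\<nabla>f y\<parallel>^(p - 1) = 1\<close> turns this bound into
  \<open>u' = \<lambda>^(1/q) \<ge> c u^(1 - 1/p)\<close>, so \<open>u^(1/p)\<close> grows at least linearly and \<open>\<tau>\<close> at
  least like \<open>(t - t\<^sub>0)^(p q)\<close>.\<close>

lemma convex_on_gradient_inequality:
  fixes f :: "'a::real_inner \<Rightarrow> real"
  assumes convex: "convex_on UNIV f"
    and grad: "\<And>x. (f has_derivative (\<lambda>h. gradf x \<bullet> h)) (at x)"
  shows "f x + gradf x \<bullet> (z - x) \<le> f z"
proof -
  define g where "g = (\<lambda>s::real. f (x + s *\<^sub>R (z - x)))"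
  have "convex_on UNIV g"
  proof (rule convex_onI)
    fix s a b :: real assume s: "0 < s" "s < 1"
    have "x + ((1 - s) * a + s * b) *\<^sub>R (z - x)
        = (1 - s) *\<^sub>R (x + a *\<^sub>R (z - x)) + s *\<^sub>R (x + b *\<^sub>R (z - x))"
      by (simp add: algebra_simps)
    then show "g ((1 - s) *\<^sub>R a + s *\<^sub>R b) \<le> (1 - s) * g a + s * g b"
      using convex_onD[OF convex, of s] s by (simp add: g_def)
  qed simp
  moreover have "(g has_real_derivative gradf x \<bullet> (z - x)) (at 0)"
  proof -
    have "((\<lambda>s::real. x + s *\<^sub>R (z - x)) has_derivative (\<lambda>s. s *\<^sub>R (z - x))) (at 0)"
      by (auto intro!: derivative_eq_intros)
    from has_derivative_compose[OF this grad]
    have "(g has_derivative (\<lambda>s. gradf x \<bullet> (s *\<^sub>R (z - x)))) (at 0)"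
      by (simp add: g_def)
    then show ?thesis
      by (simp add: has_field_derivative_def mult_commute_abs)
  qed
  ultimately have "g 0 + (gradf x \<bullet> (z - x)) * (1 - 0) \<le> g 1"
    using convex_on_imp_above_tangent[of UNIV g 0 1 "gradf x \<bullet> (z - x)"] by auto
  then show ?thesis by (simp add: g_def)
qed

lemma convex_gradient_monotone:
  fixes f :: "'a::real_inner \<Rightarrow> real"
  assumes "convex_on UNIV f"
    and "\<And>x. (f has_derivative (\<lambda>h. gradf x \<bullet> h)) (at x)"
  shows "0 \<le> (gradf x - gradf z) \<bullet> (x - z)"
  using convex_on_gradient_inequality[OF assms, of x z] convex_on_gradient_inequality[OF assms, of z x]
  by (simp add: inner_diff_left inner_diff_right algebra_simps)

lemma DERIV_within_nonpos_imp_nonincreasing: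
  fixes F F' :: "real \<Rightarrow> real"
  assumes "a \<le> b"
    and deriv: "\<And>x. x \<in> {a..b} \<Longrightarrow> (F has_real_derivative F' x) (at x within {a..b})"
    and nonpos: "\<And>x. x \<in> {a..b} \<Longrightarrow> F' x \<le> 0"
  shows "F b \<le> F a"
proof (rule DERIV_nonpos_imp_decreasing_open[OF \<open>a \<le> b\<close>])
  fix x assume "a < x" "x < b"
  then show "\<exists>D. (F has_real_derivative D) (at x) \<and> D \<le> 0"
    using deriv[of x] nonpos[of x] at_within_Icc_at[of a x b] by auto
next
  show "continuous_on {a..b} F"
    unfolding continuous_on_eq_continuous_within using deriv DERIV_continuous by blast
qed

lemma right_slope_bound_imp_le:
  fixes \<phi> :: "real \<Rightarrow> real"
  assumes "a \<le> b" and cont: "continuous_on {a..b} \<phi>"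
    and slope: "\<And>t. t \<in> {a..<b} \<Longrightarrow> eventually (\<lambda>x. \<phi> x \<le> \<phi> t + e * (x - t)) (at_right t)"
  shows "\<phi> b \<le> \<phi> a + e * (b - a)"
proof -
  define \<psi> where "\<psi> = (\<lambda>x. \<phi> x - \<phi> a - e * (x - a))"
  define S where "S = {x \<in> {a..b}. \<forall>z\<in>{a..x}. \<psi> z \<le> 0}"
  define c where "c = Sup S"
  have "a \<in> S" using \<open>a \<le> b\<close> by (simp add: S_def \<psi>_def)
  have bdd: "bdd_above S" by (auto simp: S_def bdd_above_def)
  have "a \<le> c" using cSup_upper[OF \<open>a \<in> S\<close> bdd] by (simp add: c_def)
  have "c \<le> b" unfolding c_def using \<open>a \<in> S\<close> by (intro cSup_least) (auto simp: S_def)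
  have below_c: "\<psi> z \<le> 0" if "a \<le> z" "z < c" for z
  proof -
    obtain x where "x \<in> S" "z < x" using less_cSup_iff[OF _ bdd, of z] \<open>a \<in> S\<close> \<open>z < c\<close> c_def by auto
    then show ?thesis using that by (auto simp: S_def)
  qed
  have at_c: "\<psi> c \<le> 0"
  proof (cases "a = c")
    case False
    have "continuous_on {a..c} \<psi>"
      using continuous_on_subset[OF cont] \<open>c \<le> b\<close> unfolding \<psi>_def by (auto intro!: continuous_intros)
    then show ?thesis
      using continuous_le_on_closure[of "{a..<c}" \<psi> c 0] below_c \<open>a \<le> c\<close> False by auto
  qed (simp add: \<psi>_def)
  have "c \<in> S" using below_c at_c \<open>a \<le> c\<close> \<open>c \<le> b\<close> by (force simp: S_def)
  have "c = b"
  proof (rule ccontr)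
    assume "c \<noteq> b"
    with \<open>c \<le> b\<close> \<open>a \<le> c\<close> obtain d where "d > c"
      and d: "\<And>x. c < x \<Longrightarrow> x < d \<Longrightarrow> \<phi> x \<le> \<phi> c + e * (x - c)"
      using slope[of c] by (auto simp: eventually_at_right_field)
    define c' where "c' = min b ((c + d) / 2)"
    have beyond_c: "\<psi> z \<le> 0" if "c < z" "z \<le> c'" for z
      using d[of z] that at_c \<open>d > c\<close> by (auto simp: c'_def \<psi>_def algebra_simps)
    have "c' \<in> S" unfolding S_def
    proof (intro CollectI conjI ballI)
      show "c' \<in> {a..b}" using \<open>a \<le> c\<close> \<open>c \<le> b\<close> \<open>d > c\<close> by (auto simp: c'_def)
      fix z assume "z \<in> {a..c'}"
      then show "\<psi> z \<le> 0"
        using \<open>c \<in> S\<close> beyond_c[of z] by (cases "z \<le> c") (auto simp: S_def)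
    qed
    then have "c' \<le> c" using cSup_upper[OF _ bdd] by (simp add: c_def)
    then show False using \<open>c \<le> b\<close> \<open>c \<noteq> b\<close> \<open>d > c\<close> by (simp add: c'_def min_def split: if_splits)
  qed
  then show ?thesis using at_c by (simp add: \<psi>_def)
qed

lemma right_Dini_nonpos_imp_le:
  fixes \<phi> :: "real \<Rightarrow> real"
  assumes "a \<le> b" and "continuous_on {a..b} \<phi>"
    and "\<And>t e. t \<in> {a..<b} \<Longrightarrow> e > 0 \<Longrightarrow> eventually (\<lambda>x. \<phi> x \<le> \<phi> t + e * (x - t)) (at_right t)"
  shows "\<phi> b \<le> \<phi> a"
proof (rule field_le_epsilon)
  fix e :: real assume "e > 0"
  then have "\<phi> b \<le> \<phi> a + e / (b - a + 1) * (b - a)"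
    using \<open>a \<le> b\<close> by (intro right_slope_bound_imp_le assms(1,2) assms(3)) auto
  also have "e / (b - a + 1) * (b - a) \<le> e"
    using \<open>e > 0\<close> \<open>a \<le> b\<close> by (auto simp: field_simps)
  finally show "\<phi> b \<le> \<phi> a + e" by simp
qed

text \<open>A step \<open>d = r - h c u\<close> of the flow \<open>y' = - c G y\<close> from a point with \<open>G = u\<close> to one
  with \<open>G = w\<close>: by monotonicity of \<open>G\<close>, \<open>\<parallel>G\<parallel>\<^sup>2\<close> grows at most by \<open>o(h)\<close> when \<open>\<parallel>r\<parallel> = o(h)\<close>.\<close>

lemma monotone_step_norm_estimate:
  fixes u w d r :: "'a::real_inner"
  assumes mono: "0 \<le> (w - u) \<bullet> d" and step: "d = r - (h * c) *\<^sub>R u"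
    and lip: "norm (w - u) \<le> L * norm d"
    and "L \<ge> 0" "h > 0" "c > 0" "norm r \<le> h"
  shows "(norm w)\<^sup>2 \<le> (norm u)\<^sup>2
    + h * (2 * L * (c * norm u + 1) / c * (norm r / h) + (L * (c * norm u + 1))\<^sup>2 * h)"
proof -
  define M where "M = c * norm u + 1"
  have "norm d \<le> norm r + h * c * norm u"
    using norm_triangle_ineq4[of r "(h * c) *\<^sub>R u"] step \<open>h > 0\<close> \<open>c > 0\<close> by simp
  also have "\<dots> \<le> M * h"
    using \<open>norm r \<le> h\<close> by (simp add: M_def algebra_simps)
  finally have "L * norm d \<le> L * (M * h)" using \<open>L \<ge> 0\<close> by (rule mult_left_mono)
  then have D: "norm (w - u) \<le> L * M * h" using lip by simp
  have "h * (c * ((w - u) \<bullet> u)) \<le> (w - u) \<bullet> r"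
    using mono step by (simp add: inner_diff_right algebra_simps)
  also have "\<dots> \<le> norm (w - u) * norm r"
    using Cauchy_Schwarz_ineq2 abs_ge_self order_trans by blast
  also have "\<dots> \<le> h * (L * M * norm r)"
    using mult_right_mono[OF D norm_ge_zero] by (simp add: algebra_simps)
  finally have "c * ((w - u) \<bullet> u) \<le> L * M * norm r" using \<open>h > 0\<close> by simp
  then have "(w - u) \<bullet> u \<le> L * M * norm r / c" using \<open>c > 0\<close> by (simp add: field_simps)
  moreover have "(norm (w - u))\<^sup>2 \<le> (L * M * h)\<^sup>2"
    using D by (intro power_mono) auto
  moreover have "(norm w)\<^sup>2 = (norm u)\<^sup>2 + 2 * ((w - u) \<bullet> u) + (norm (w - u))\<^sup>2"
    by (simp add: power2_norm_eq_inner inner_diff_left inner_diff_right inner_commute)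
  moreover have "2 * (L * M * norm r / c) + (L * M * h)\<^sup>2 = h * (2 * L * M / c * (norm r / h) + (L * M)\<^sup>2 * h)"
    using \<open>h > 0\<close> by (simp add: field_simps power2_eq_square)
  ultimately show ?thesis unfolding M_def[symmetric] by linarith
qed

lemma norm_gradient_right_slope_along_flow:
  fixes G :: "'a::real_inner \<Rightarrow> 'a" and y :: "real \<Rightarrow> 'a"
  assumes mono: "\<And>x z. 0 \<le> (G x - G z) \<bullet> (x - z)"
    and lip: "\<And>B. bounded B \<Longrightarrow> \<exists>L. \<forall>x\<in>B. \<forall>z\<in>B. norm (G x - G z) \<le> L * norm (x - z)"
    and y: "(y has_vector_derivative - c *\<^sub>R G (y t)) (at_right t)"
    and "c > 0" "e > 0"
  shows "eventually (\<lambda>x. (norm (G (y x)))\<^sup>2 \<le> (norm (G (y t)))\<^sup>2 + e * (x - t)) (at_right t)"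
proof -
  define r where "r = (\<lambda>x. y x - y t + ((x - t) * c) *\<^sub>R G (y t))"
  define M where "M = c * norm (G (y t)) + 1"
  obtain L where "L \<ge> 0" and L: "\<And>x. x \<in> ball (y t) 1 \<Longrightarrow> norm (G x - G (y t)) \<le> L * norm (x - y t)"
  proof -
    obtain L where L: "\<forall>x\<in>ball (y t) 1. \<forall>z\<in>ball (y t) 1. norm (G x - G z) \<le> L * norm (x - z)"
      using lip[of "ball (y t) 1"] by auto
    show ?thesis
    proof (rule that[of "max L 0"])
      fix x assume "x \<in> ball (y t) 1"
      then have "norm (G x - G (y t)) \<le> L * norm (x - y t)" using L by simp
      also have "\<dots> \<le> max L 0 * norm (x - y t)" by (intro mult_right_mono) auto
      finally show "norm (G x - G (y t)) \<le> max L 0 * norm (x - y t)" .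
    qed simp
  qed
  have r_small: "((\<lambda>x. norm (r x) / (x - t)) \<longlongrightarrow> 0) (at_right t)"
  proof -
    have "((\<lambda>x. (1 / norm (x - t)) *\<^sub>R (y x - (y t + (x - t) *\<^sub>R - c *\<^sub>R G (y t)))) \<longlongrightarrow> 0) (at_right t)"
      using y unfolding has_vector_derivative_def has_derivative_within by blast
    moreover have "y x - (y t + (x - t) *\<^sub>R - c *\<^sub>R G (y t)) = r x" for x
      by (simp add: r_def algebra_simps)
    ultimately have "((\<lambda>x. (1 / norm (x - t)) *\<^sub>R r x) \<longlongrightarrow> 0) (at_right t)"
      by simp
    then have "((\<lambda>x. norm ((1 / norm (x - t)) *\<^sub>R r x)) \<longlongrightarrow> 0) (at_right t)"
      by (rule tendsto_norm_zero)
    then show ?thesis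
      by (rule Lim_transform_eventually) (use eventually_at_right_less in \<open>eventually_elim, simp\<close>)
  qed
  have h_small: "((\<lambda>x. x - t) \<longlongrightarrow> 0) (at_right t)"
    using tendsto_diff[OF tendsto_ident_at[of t "{t<..}"] tendsto_const[of t]] by simp
  have "((\<lambda>x. 2 * L * M / c * (norm (r x) / (x - t)) + (L * M)\<^sup>2 * (x - t)) \<longlongrightarrow> 0) (at_right t)"
    using tendsto_add[OF tendsto_mult[OF tendsto_const[of "2 * L * M / c"] r_small]
        tendsto_mult[OF tendsto_const[of "(L * M)\<^sup>2"] h_small]]
    by simp
  then have "eventually (\<lambda>x. 2 * L * M / c * (norm (r x) / (x - t)) + (L * M)\<^sup>2 * (x - t) < e) (at_right t)"
    using \<open>e > 0\<close> by (rule order_tendstoD(2))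
  moreover have "eventually (\<lambda>x. norm (r x) / (x - t) < 1) (at_right t)"
    using order_tendstoD(2)[OF r_small, of 1] by simp
  moreover have "eventually (\<lambda>x. dist (y x) (y t) < 1) (at_right t)"
    using has_vector_derivative_continuous[OF y] by (intro tendstoD) (auto simp: continuous_within)
  ultimately show ?thesis
    using eventually_at_right_less
  proof eventually_elim
    case (elim x)
    then have "norm (r x) \<le> x - t" by simp
    with elim \<open>L \<ge> 0\<close> \<open>c > 0\<close> have "(norm (G (y x)))\<^sup>2 \<le> (norm (G (y t)))\<^sup>2
        + (x - t) * (2 * L * M / c * (norm (r x) / (x - t)) + (L * M)\<^sup>2 * (x - t))"
      unfolding M_def
      by (intro monotone_step_norm_estimate[where d = "y x - y t"] mono L)
        (auto simp: r_def dist_commute)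
    also have "\<dots> \<le> (norm (G (y t)))\<^sup>2 + (x - t) * e"
      using elim by (intro add_left_mono mult_left_mono) auto
    finally show ?case by (simp add: mult.commute)
  qed
qed

lemma norm_gradient_antimono_along_flow:
  fixes G :: "'a::real_inner \<Rightarrow> 'a" and y y' :: "real \<Rightarrow> 'a" and c :: "real \<Rightarrow> real"
  assumes mono: "\<And>x z. 0 \<le> (G x - G z) \<bullet> (x - z)"
    and lip: "\<And>B. bounded B \<Longrightarrow> \<exists>L. \<forall>x\<in>B. \<forall>z\<in>B. norm (G x - G z) \<le> L * norm (x - z)"
    and cont: "continuous_on UNIV G"
    and y_deriv: "\<And>t. t \<ge> t0 \<Longrightarrow> (y has_vector_derivative y' t) (at t within {t0..})"
    and flow: "\<And>t. t \<ge> t0 \<Longrightarrow> y' t = - c t *\<^sub>R G (y t)"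
    and c_pos: "\<And>t. t \<ge> t0 \<Longrightarrow> c t > 0"
    and "t0 \<le> a" "a \<le> b"
  shows "norm (G (y b)) \<le> norm (G (y a))"
proof -
  have "(norm (G (y b)))\<^sup>2 \<le> (norm (G (y a)))\<^sup>2"
  proof (rule right_Dini_nonpos_imp_le[OF \<open>a \<le> b\<close>])
    have "continuous_on {t0..} y"
      unfolding continuous_on_eq_continuous_within
      by (auto intro: has_vector_derivative_continuous[OF y_deriv])
    then have "continuous_on {a..b} y"
      by (rule continuous_on_subset) (use \<open>t0 \<le> a\<close> in auto)
    then have "continuous_on {a..b} (\<lambda>s. G (y s))"
      by (rule continuous_on_compose2[OF cont _ subset_UNIV])
    then show "continuous_on {a..b} (\<lambda>s. (norm (G (y s)))\<^sup>2)"
      by (intro continuous_intros)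
  next
    fix t e :: real assume "t \<in> {a..<b}" "e > 0"
    then have "t \<ge> t0" using \<open>t0 \<le> a\<close> by simp
    then have "(y has_vector_derivative y' t) (at_right t)"
      by (intro has_vector_derivative_within_subset[OF y_deriv]) auto
    then have "(y has_vector_derivative - c t *\<^sub>R G (y t)) (at_right t)"
      unfolding flow[OF \<open>t \<ge> t0\<close>] .
    from norm_gradient_right_slope_along_flow[OF mono lip this c_pos[OF \<open>t \<ge> t0\<close>] \<open>e > 0\<close>]
    show "eventually (\<lambda>x. (norm (G (y x)))\<^sup>2 \<le> (norm (G (y t)))\<^sup>2 + e * (x - t)) (at_right t)" .
  qed
  then show ?thesis by (rule power2_le_imp_le) simp
qed

lemma rescaled_flow_energy_derivative:
  fixes f :: "'a::real_inner \<Rightarrow> real"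
  assumes convex: "convex_on UNIV f"
    and grad: "\<And>x. (f has_derivative (\<lambda>h. gradf x \<bullet> h)) (at x)"
    and tau: "(tau has_real_derivative tau') (at t within S)" and "tau' \<ge> 0"
    and y: "(y has_vector_derivative - tau' *\<^sub>R gradf (y t)) (at t within S)"
  shows "\<exists>E'. ((\<lambda>s. tau s * (f (y s) - f xmin) + (norm (y s - xmin))\<^sup>2 / 2)
      has_real_derivative E') (at t within S) \<and> E' \<le> - (tau t * tau' * (norm (gradf (y t)))\<^sup>2)"
proof -
  define g where "g = gradf (y t)"
  define v where "v = - tau' *\<^sub>R g"
  have y': "(y has_derivative (\<lambda>h. h *\<^sub>R v)) (at t within S)"
    using y by (simp add: g_def v_def has_vector_derivative_def)
  have fy: "((\<lambda>s. f (y s)) has_real_derivative g \<bullet> v) (at t within S)"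
    using has_derivative_compose[OF y' grad] by (simp add: g_def has_field_derivative_def mult_commute_abs)
  have sq: "((\<lambda>s. (norm (y s - xmin))\<^sup>2) has_real_derivative 2 * ((y t - xmin) \<bullet> v)) (at t within S)"
  proof -
    have y_xmin: "((\<lambda>s. y s - xmin) has_derivative (\<lambda>h. h *\<^sub>R v)) (at t within S)"
      using has_derivative_diff[OF y' has_derivative_const[of xmin]] by simp
    have "(\<lambda>h. (y t - xmin) \<bullet> (h *\<^sub>R v) + (h *\<^sub>R v) \<bullet> (y t - xmin)) = (*) (2 * ((y t - xmin) \<bullet> v))"
      by (auto simp: inner_commute algebra_simps)
    then show ?thesis
      using has_derivative_inner[OF y_xmin y_xmin]
      unfolding power2_norm_eq_inner has_field_derivative_def by simp
  qed
  have energy: "((\<lambda>s. tau s * (f (y s) - f xmin) + (norm (y s - xmin))\<^sup>2 / 2) has_real_derivative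
      tau' * (f (y t) - f xmin) + (g \<bullet> v - 0) * tau t + 2 * ((y t - xmin) \<bullet> v) / 2) (at t within S)"
    by (rule DERIV_add[OF DERIV_mult[OF tau DERIV_diff[OF fy DERIV_const]] DERIV_cdivide[OF sq]])
  have "tau' * (f (y t) - f xmin) \<le> tau' * (g \<bullet> (y t - xmin))"
    using convex_on_gradient_inequality[OF convex grad, of "y t" xmin] \<open>tau' \<ge> 0\<close>
    by (intro mult_left_mono) (auto simp: g_def inner_diff_right)
  moreover have "(g \<bullet> v - 0) * tau t = - (tau t * tau' * (norm (gradf (y t)))\<^sup>2)"
    by (simp add: g_def v_def power2_norm_eq_inner)
  moreover have "2 * ((y t - xmin) \<bullet> v) / 2 = - (tau' * (g \<bullet> (y t - xmin)))"
    by (simp add: v_def inner_commute)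
  ultimately have "tau' * (f (y t) - f xmin) + (g \<bullet> v - 0) * tau t + 2 * ((y t - xmin) \<bullet> v) / 2
      \<le> - (tau t * tau' * (norm (gradf (y t)))\<^sup>2)"
    by linarith
  with energy show ?thesis by blast
qed

lemma rescaled_gradient_flow_bounded:
  fixes f :: "'a::real_inner \<Rightarrow> real" and y y' :: "real \<Rightarrow> 'a"
  assumes convex: "convex_on UNIV f"
    and grad: "\<And>x. (f has_derivative (\<lambda>h. gradf x \<bullet> h)) (at x)"
    and min: "\<And>z. f xmin \<le> f z"
    and tau_deriv: "\<And>t. t \<ge> t0 \<Longrightarrow> (tau has_real_derivative tau' t) (at t within {t0..})"
    and tau_nonneg: "\<And>t. t \<ge> t0 \<Longrightarrow> 0 \<le> tau t"
    and tau'_nonneg: "\<And>t. t \<ge> t0 \<Longrightarrow> 0 \<le> tau' t"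
    and y_deriv: "\<And>t. t \<ge> t0 \<Longrightarrow> (y has_vector_derivative y' t) (at t within {t0..})"
    and flow: "\<And>t. t \<ge> t0 \<Longrightarrow> y' t = - tau' t *\<^sub>R gradf (y t)"
    and antimono: "\<And>a b. t0 \<le> a \<Longrightarrow> a \<le> b \<Longrightarrow> norm (gradf (y b)) \<le> norm (gradf (y a))"
  shows "\<exists>K>0. \<forall>t\<ge>t0. tau t * norm (gradf (y t)) \<le> K"
proof -
  define E where "E = (\<lambda>s. tau s * (f (y s) - f xmin) + (norm (y s - xmin))\<^sup>2 / 2)"
  define B where "B = 2 * E t0 + (tau t0 * norm (gradf (y t0)))\<^sup>2"
  have E_nonneg: "E s \<ge> 0" if "s \<ge> t0" for s
    using tau_nonneg[OF that] min[of "y s"] by (simp add: E_def)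
  have "tau t * norm (gradf (y t)) \<le> sqrt B + 1" if "t \<ge> t0" for t
  proof -
    define N where "N = (norm (gradf (y t)))\<^sup>2"
    have N_le: "N \<le> (norm (gradf (y s)))\<^sup>2" if "t0 \<le> s" "s \<le> t" for s
      unfolding N_def using antimono[OF that] by (simp add: power_mono)
    have "\<exists>E'. (E has_real_derivative E') (at s within {t0..t})
        \<and> E' \<le> - (tau s * tau' s * (norm (gradf (y s)))\<^sup>2)" if s: "s \<in> {t0..t}" for s
      using rescaled_flow_energy_derivative[OF convex grad DERIV_subset[OF tau_deriv] tau'_nonneg, of s]
        has_vector_derivative_within_subset[OF y_deriv, of s "{t0..t}"] flow[of s] s
      unfolding E_def by auto
    then obtain E' where E': "\<And>s. s \<in> {t0..t} \<Longrightarrow> (E has_real_derivative E' s) (at s within {t0..t})"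
      and E'_le: "\<And>s. s \<in> {t0..t} \<Longrightarrow> E' s \<le> - (tau s * tau' s * (norm (gradf (y s)))\<^sup>2)"
      by metis
    have "E t + N / 2 * (tau t)\<^sup>2 \<le> E t0 + N / 2 * (tau t0)\<^sup>2"
    proof (rule DERIV_within_nonpos_imp_nonincreasing[OF \<open>t \<ge> t0\<close>])
      fix s assume s: "s \<in> {t0..t}"
      have tau: "(tau has_real_derivative tau' s) (at s within {t0..t})"
        using DERIV_subset[OF tau_deriv] s by auto
      show "((\<lambda>s. E s + N / 2 * (tau s)\<^sup>2) has_real_derivative E' s + N * tau s * tau' s) (at s within {t0..t})"
        using E'[OF s] tau by (auto intro!: derivative_eq_intros)
      have "N * (tau s * tau' s) \<le> (norm (gradf (y s)))\<^sup>2 * (tau s * tau' s)"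
        using N_le s tau_nonneg tau'_nonneg by (intro mult_right_mono) auto
      then show "E' s + N * tau s * tau' s \<le> 0"
        using E'_le[OF s] by (simp add: algebra_simps)
    qed
    then have "N * (tau t)\<^sup>2 \<le> 2 * E t0 + N * (tau t0)\<^sup>2"
      using E_nonneg[OF \<open>t \<ge> t0\<close>] by simp
    also have "N * (tau t0)\<^sup>2 \<le> (norm (gradf (y t0)))\<^sup>2 * (tau t0)\<^sup>2"
      using N_le \<open>t \<ge> t0\<close> by (intro mult_right_mono) auto
    finally have "(tau t * norm (gradf (y t)))\<^sup>2 \<le> B"
      by (simp add: B_def N_def power_mult_distrib mult.commute)
    then show ?thesis using real_le_rsqrt by fastforce
  qed
  moreover have "sqrt B + 1 > 0"
    using E_nonneg[of t0] by (simp add: B_def add_nonneg_pos)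
  ultimately show ?thesis by blast
qed

definition tau_base :: "real \<Rightarrow> real \<Rightarrow> (real \<Rightarrow> real) \<Rightarrow> real \<Rightarrow> real" where
  "tau_base q t0 lam t = t0 + integral {t0..t} (\<lambda>r. lam r powr (1 / q))"

lemma tau_fun_eq_tau_base: "tau_fun q t0 lam t = (1 / q powr q) * tau_base q t0 lam t powr q"
  by (simp add: tau_fun_def tau_base_def)

lemma tau_fun_nonneg: "tau_fun q t0 lam t \<ge> 0"
  by (simp add: tau_fun_def)

lemma tau_base_ge:
  assumes "continuous_on {t0..} lam" "\<And>t. t \<ge> t0 \<Longrightarrow> lam t > 0" "t \<ge> t0"
  shows "tau_base q t0 lam t \<ge> t0"
proof -
  have "continuous_on {t0..t} (\<lambda>r. lam r powr (1 / q))"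
    using assms(2,3) by (intro continuous_intros continuous_on_subset[OF assms(1)]) force+
  then show ?thesis
    by (simp add: tau_base_def integral_nonneg integrable_continuous_interval)
qed

lemma tau_base_has_derivative:
  assumes "continuous_on {t0..} lam" "\<And>t. t \<ge> t0 \<Longrightarrow> lam t > 0" "t0 \<le> t" "t \<le> b"
  shows "(tau_base q t0 lam has_real_derivative lam t powr (1 / q)) (at t within {t0..b})"
proof -
  have "continuous_on {t0..b} (\<lambda>r. lam r powr (1 / q))"
    using assms(2,3) by (intro continuous_intros continuous_on_subset[OF assms(1)]) force+
  from DERIV_add[OF DERIV_const integral_has_real_derivative[OF this]] assms(3,4)
  show ?thesis by (simp add: tau_base_def[abs_def])
qed

lemma tau_fun_derivative_pos:
  assumes "q > 0" "t0 > 0" "continuous_on {t0..} lam" "\<And>t. t \<ge> t0 \<Longrightarrow> lam t > 0"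
    and deriv: "(tau_fun q t0 lam has_real_derivative D) (at t within {t0..})" and "t \<ge> t0"
  shows "D > 0"
proof -
  define u where "u = tau_base q t0 lam"
  have "u t > 0" using tau_base_ge[OF assms(3,4,6), of q] \<open>t0 > 0\<close> unfolding u_def by linarith
  have formula: "(tau_fun q t0 lam has_real_derivative 1 / q powr q * (q * u t powr (q - 1) * lam t powr (1 / q)))
      (at t within {t0..t + 1})"
    unfolding tau_fun_eq_tau_base[abs_def] u_def[symmetric]
    using tau_base_has_derivative[OF assms(3,4,6), of "t + 1" q] \<open>u t > 0\<close> \<open>q > 0\<close>
    by (auto simp: u_def intro!: derivative_eq_intros)
  moreover have "(tau_fun q t0 lam has_real_derivative D) (at t within {t0..t + 1})"
    using DERIV_subset[OF deriv] by auto
  moreover have "at t within {t0..t + 1} \<noteq> bot"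
    using \<open>t \<ge> t0\<close> by (auto simp: trivial_limit_within islimpt_Icc)
  ultimately have "D = 1 / q powr q * (q * u t powr (q - 1) * lam t powr (1 / q))"
    by (metis has_field_derivative_unique)
  then show ?thesis using \<open>q > 0\<close> \<open>u t > 0\<close> assms(4)[OF \<open>t \<ge> t0\<close>] by simp
qed

lemma balance_lower_bound:
  fixes lam n u p q K :: real
  assumes "p > 1" "q > 0" "lam > 0" "n \<ge> 0" "u > 0" "K > 0"
    and balance: "lam powr p * n powr (p - 1) = 1"
    and bound: "(1 / q powr q) * u powr q * n \<le> K"
  shows "(u / q) powr (1 - 1 / p) / K powr ((1 - 1 / p) / q) \<le> lam powr (1 / q)"
proof -
  define \<tau> where "\<tau> = (1 / q powr q) * u powr q"
  have "\<tau> > 0" using \<open>u > 0\<close> \<open>q > 0\<close> by (simp add: \<tau>_def)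
  have "n \<noteq> 0" using balance \<open>p > 1\<close> by auto
  then have "n > 0" using \<open>n \<ge> 0\<close> by simp
  have "lam powr p = 1 / n powr (p - 1)"
    using balance \<open>n > 0\<close> by (simp add: field_simps)
  also have "\<dots> = n powr (- (p - 1))"
    by (rule powr_minus_divide[symmetric])
  also have "\<dots> \<ge> (K / \<tau>) powr (- (p - 1))"
  proof (rule powr_mono2')
    have "n * \<tau> \<le> K" using bound by (simp add: \<tau>_def mult.commute)
    then show "n \<le> K / \<tau>" using \<open>\<tau> > 0\<close> by (simp add: pos_le_divide_eq)
  qed (use \<open>p > 1\<close> \<open>n > 0\<close> in auto)
  finally have "(lam powr p) powr (1 / (p * q)) \<ge> ((K / \<tau>) powr (- (p - 1))) powr (1 / (p * q))"
    using \<open>p > 1\<close> \<open>q > 0\<close> by (intro powr_mono2) auto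
  then have "lam powr (p * (1 / (p * q))) \<ge> (K / \<tau>) powr (- (p - 1) * (1 / (p * q)))"
    by (simp only: powr_powr)
  moreover have "p * (1 / (p * q)) = 1 / q" "- (p - 1) * (1 / (p * q)) = - ((1 - 1 / p) / q)"
    using \<open>p > 1\<close> \<open>q > 0\<close> by (simp_all add: field_simps)
  ultimately have "lam powr (1 / q) \<ge> (K / \<tau>) powr (- ((1 - 1 / p) / q))"
    by metis
  also have "(K / \<tau>) powr (- ((1 - 1 / p) / q)) = \<tau> powr ((1 - 1 / p) / q) / K powr ((1 - 1 / p) / q)"
    using \<open>K > 0\<close> \<open>\<tau> > 0\<close> by (simp add: powr_minus_divide powr_divide)
  also have "\<tau> powr ((1 - 1 / p) / q) = (u / q) powr (1 - 1 / p)"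
    using \<open>u > 0\<close> \<open>q > 0\<close> by (simp add: \<tau>_def powr_divide powr_powr)
  finally show ?thesis .
qed

lemma DERIV_ge_powr_imp_power_growth:
  fixes u u' :: "real \<Rightarrow> real"
  assumes "p > 0" "c \<ge> 0"
    and u_pos: "\<And>t. t \<ge> t0 \<Longrightarrow> u t > 0"
    and deriv: "\<And>t b. t0 \<le> t \<Longrightarrow> t \<le> b \<Longrightarrow> (u has_real_derivative u' t) (at t within {t0..b})"
    and ineq: "\<And>t. t \<ge> t0 \<Longrightarrow> c * u t powr (1 - 1 / p) \<le> u' t"
    and "t \<ge> t0"
  shows "(c / p * (t - t0)) powr p \<le> u t"
proof -
  define W where "W = (\<lambda>s. c / p * (s - t0) - u s powr (1 / p))"
  have "W t \<le> W t0"
  proof (rule DERIV_within_nonpos_imp_nonincreasing[OF \<open>t \<ge> t0\<close>])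
    fix s assume s: "s \<in> {t0..t}"
    show "(W has_real_derivative c / p - 1 / p * u s powr (1 / p - 1) * u' s) (at s within {t0..t})"
      unfolding W_def using deriv[of s t] u_pos[of s] s \<open>p > 0\<close> by (auto intro!: derivative_eq_intros)
    have "u s powr (1 / p - 1) * (c * u s powr (1 - 1 / p)) = c"
      using u_pos[of s] s by (simp add: powr_add[symmetric])
    moreover have "u s powr (1 / p - 1) * (c * u s powr (1 - 1 / p)) \<le> u s powr (1 / p - 1) * u' s"
      using ineq[of s] s by (intro mult_left_mono) auto
    ultimately have "c \<le> u s powr (1 / p - 1) * u' s" by linarith
    then show "c / p - 1 / p * u s powr (1 / p - 1) * u' s \<le> 0"
      using \<open>p > 0\<close> by (simp add: field_simps)
  qed
  then have "c / p * (t - t0) - u t powr (1 / p) \<le> - (u t0 powr (1 / p))"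
    by (simp add: W_def)
  then have "c / p * (t - t0) \<le> u t powr (1 / p)"
    using powr_ge_zero[of "u t0" "1 / p"] by linarith
  then have "(c / p * (t - t0)) powr p \<le> (u t powr (1 / p)) powr p"
    using \<open>p > 0\<close> \<open>c \<ge> 0\<close> \<open>t \<ge> t0\<close> by (intro powr_mono2) auto
  then show ?thesis using u_pos[OF \<open>t \<ge> t0\<close>] \<open>p > 0\<close> by (simp add: powr_powr)
qed


lemma tau_fun_power_growth:
  fixes lam n :: "real \<Rightarrow> real"
  assumes "p > 1" "q > 0" "t0 > 0"
    and lam_cont: "continuous_on {t0..} lam" and lam_pos: "\<And>t. t \<ge> t0 \<Longrightarrow> lam t > 0"
    and n_nonneg: "\<And>t. n t \<ge> 0"
    and balance: "\<And>t. t \<ge> t0 \<Longrightarrow> lam t powr p * n t powr (p - 1) = 1"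
    and bound: "\<And>t. t \<ge> t0 \<Longrightarrow> tau_fun q t0 lam t * n t \<le> K" and "K > 0"
  shows "\<exists>C1>0. \<forall>t\<ge>t0. tau_fun q t0 lam t \<ge> C1 * (t - t0) powr (p * q)"
proof -
  define u where "u = tau_base q t0 lam"
  define \<beta> where "\<beta> = 1 - 1 / p"
  define c where "c = 1 / (q powr \<beta> * K powr (\<beta> / q))"
  have "c > 0" using \<open>q > 0\<close> \<open>K > 0\<close> by (simp add: c_def)
  have u_pos: "u t > 0" if "t \<ge> t0" for t
    using tau_base_ge[OF lam_cont lam_pos that, of q] \<open>t0 > 0\<close> unfolding u_def by linarith
  have lam_lower: "c * u t powr \<beta> \<le> lam t powr (1 / q)" if "t \<ge> t0" for t
  proof -
    have "(u t / q) powr \<beta> / K powr (\<beta> / q) \<le> lam t powr (1 / q)"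
      using balance_lower_bound[OF \<open>p > 1\<close> \<open>q > 0\<close> lam_pos[OF that] n_nonneg u_pos[OF that] \<open>K > 0\<close>
          balance[OF that]] bound[OF that]
      by (simp add: \<beta>_def tau_fun_eq_tau_base u_def)
    then show ?thesis using u_pos[OF that] \<open>q > 0\<close> by (simp add: c_def powr_divide)
  qed
  have growth: "(c / p * (t - t0)) powr p \<le> u t" if "t \<ge> t0" for t
  proof (rule DERIV_ge_powr_imp_power_growth[OF _ _ u_pos _ _ that])
    show "p > 0" "c \<ge> 0" using \<open>p > 1\<close> \<open>c > 0\<close> by simp_all
    show "(u has_real_derivative lam s powr (1 / q)) (at s within {t0..b})" if "t0 \<le> s" "s \<le> b" for s b
      unfolding u_def using lam_cont lam_pos that by (rule tau_base_has_derivative)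
    show "c * u s powr (1 - 1 / p) \<le> lam s powr (1 / q)" if "t0 \<le> s" for s
      using lam_lower[OF that] by (simp add: \<beta>_def)
  qed
  show ?thesis
  proof (intro exI[of _ "1 / q powr q * (c / p) powr (p * q)"] conjI allI impI)
    show "1 / q powr q * (c / p) powr (p * q) > 0"
      using \<open>q > 0\<close> \<open>c > 0\<close> \<open>p > 1\<close> by simp
    fix t assume "t \<ge> t0"
    have "(c / p) powr (p * q) * (t - t0) powr (p * q) = ((c / p * (t - t0)) powr p) powr q"
      unfolding powr_powr by (rule powr_mult[symmetric])
    also have "\<dots> \<le> u t powr q"
      using growth[OF \<open>t \<ge> t0\<close>] \<open>q > 0\<close> \<open>c > 0\<close> \<open>p > 1\<close> \<open>t \<ge> t0\<close> by (intro powr_mono2) auto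
    finally show "tau_fun q t0 lam t \<ge> 1 / q powr q * (c / p) powr (p * q) * (t - t0) powr (p * q)"
      using \<open>q > 0\<close> by (simp add: tau_fun_eq_tau_base u_def mult.assoc divide_right_mono)
  qed
qed

theorem mainTheorem6:
  fixes f :: "'a::{real_inner, complete_space} \<Rightarrow> real"
    and gradf :: "'a \<Rightarrow> 'a"
    and y y' :: "real \<Rightarrow> 'a"
    and lam :: "real \<Rightarrow> real"
    and tau' :: "real \<Rightarrow> real"
    and t0 q p :: real
  assumes f_convex: "convex_on UNIV f"
    and f_grad: "\<And>x. (f has_derivative (\<lambda>h. gradf x \<bullet> h)) (at x)"
    and grad_cont: "continuous_on UNIV gradf"
    and argmin_ne: "\<exists>x. \<forall>z. f x \<le> f z"
    and grad_lip_bdd: "\<And>B. bounded B \<Longrightarrow>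
            \<exists>L. \<forall>x\<in>B. \<forall>z\<in>B. norm (gradf x - gradf z) \<le> L * norm (x - z)"
    and t0_pos: "t0 > 0"
    and q_ge: "q \<ge> 1/2"
    and p_gt: "p > 1"
    and y_deriv: "\<And>t. t \<ge> t0 \<Longrightarrow> (y has_vector_derivative y' t) (at t within {t0..})"
    and y'_cont: "continuous_on {t0..} y'"
    and lam_cont: "continuous_on {t0..} lam"
    and lam_pos: "\<And>t. t \<ge> t0 \<Longrightarrow> lam t > 0"
    and tau_deriv: "\<And>t. t \<ge> t0 \<Longrightarrow>
            (tau_fun q t0 lam has_real_derivative tau' t) (at t within {t0..})"
    and ode: "\<And>t. t \<ge> t0 \<Longrightarrow> y' t + tau' t *\<^sub>R gradf (y t) = 0"
    and lam_rel: "\<And>t. t \<ge> t0 \<Longrightarrow> lam t powr p * norm (gradf (y t)) powr (p - 1) = 1"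
  shows "\<exists>C1>0. \<forall>t\<ge>t0. tau_fun q t0 lam t \<ge> C1 * (t - t0) powr (p * q)"
proof -
  have "q > 0" using q_ge by simp
  have tau'_pos: "tau' t > 0" if "t \<ge> t0" for t
    by (rule tau_fun_derivative_pos[OF \<open>q > 0\<close> t0_pos lam_cont lam_pos tau_deriv[OF that] that])
  have flow: "y' t = - tau' t *\<^sub>R gradf (y t)" if "t \<ge> t0" for t
    using ode[OF that] by (simp add: eq_neg_iff_add_eq_0)
  have antimono: "norm (gradf (y b)) \<le> norm (gradf (y a))" if "t0 \<le> a" "a \<le> b" for a b
    using norm_gradient_antimono_along_flow[OF convex_gradient_monotone[OF f_convex f_grad]
        grad_lip_bdd grad_cont y_deriv flow tau'_pos that] .
  obtain xmin where min: "\<And>z. f xmin \<le> f z" using argmin_ne by blast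
  obtain K where "K > 0" and K: "\<And>t. t \<ge> t0 \<Longrightarrow> tau_fun q t0 lam t * norm (gradf (y t)) \<le> K"
    using rescaled_gradient_flow_bounded[OF f_convex f_grad min tau_deriv tau_fun_nonneg
        less_imp_le[OF tau'_pos] y_deriv flow antimono] by blast
  show ?thesis
    by (rule tau_fun_power_growth[OF p_gt \<open>q > 0\<close> t0_pos lam_cont lam_pos norm_ge_zero lam_rel K \<open>K > 0\<close>])
qed

end
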